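(* Let $r\ge1$ and let $(\lambda_{i,j})_{1\le i,j\le r}$ be a complex $r\times r$ table. Let $V$ be the space of functions $\{1,\dots,r\}\to\mathbb{C}$, equipped with some inner product $\langle\cdot,\cdot\rangle$. Define $\lambda_i\in V$ by $\lambda_i(j)=\lambda_{i,j}$, let $V$ carry the pointwise product $(fg)(j)=f(j)g(j)$, and for $f\in V$ let $M_f:V\to V$, $g\mapsto fg$, and $M_i:=M_{\lambda_i}$. Assume that: (i) $\langle\lambda_i,\lambda_j\rangle=\delta_{i,j}$ for all $i,j$; (ii) for every $i$ there is $j$ (automatically unique, denoted $i^*$) such that the adjoint of $M_i$ with respect to $\langle\cdot,\cdot\rangle$ equals $M_j$; (iii) $M_1$ is the identity; (iv) $N_{i,j}^k:=\langle\lambda_i\lambda_j,\lambda_k\rangle$ is a nonnegative integer for all $i,j,k$. Then $(N_{i,j}^k)$ are the structure constants of a commutative fusion ring with basis $b_1,\dots,b_r$ (unit $b_1$, duality $i\mapsto i^*$), and $(\lambda_{i,j})$ is its eigentable. Conversely, every eigentable of a commutative fusion ring satisfies all the assumptions (i)–(iv) for a suitable inner product on $V$.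
   Context: A fusion ring of rank $r$ is a ring which is a free $\mathbb{Z}$-module with basis $\{b_1,\dots,b_r\}$, multiplication $b_ib_j=\sum_k N_{i,j}^k b_k$ with $N_{i,j}^k\in\mathbb{Z}_{\ge0}$, associative, with $b_1$ a two-sided unit, such that for every $i$ there is a unique $i^*$ with $N_{i,k}^1=N_{k,i}^1=\delta_{i^*,k}$ for all $k$, and satisfying Frobenius reciprocity $N_{i,j}^k=N_{i^*,k}^j=N_{k,j^*}^i$. Its fusion matrices are $M_i=(N_{i,j}^k)_{k,j}$. If the ring is commutative, these matrices are pairwise commuting and normal, hence simultaneously diagonalizable: writing the simultaneous diagonalizations as $\mathrm{diag}(\lambda_{i,1},\dots,\lambda_{i,r})$, the table $(\lambda_{i,j})$ (row $i$ indexed by the basis element $b_i$, column $j$ by the $j$-th common eigenvector) is called the eigentable of the commutative fusion ring. *)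

theory Defs
  imports Complex_Main
begin

text \<open>Indices run over {1..r}. The space V of functions {1..r} -> complex is represented
  by functions nat => complex that vanish outside {1..r}.\<close>

definition Vsp :: "nat \<Rightarrow> (nat \<Rightarrow> complex) set" where
  "Vsp r = {f. \<forall>j. j \<notin> {1..r} \<longrightarrow> f j = 0}"

definition row_vec :: "nat \<Rightarrow> (nat \<Rightarrow> nat \<Rightarrow> complex) \<Rightarrow> nat \<Rightarrow> (nat \<Rightarrow> complex)" where
  "row_vec r lam i = (\<lambda>j. if j \<in> {1..r} then lam i j else 0)"

definition pmult :: "(nat \<Rightarrow> complex) \<Rightarrow> (nat \<Rightarrow> complex) \<Rightarrow> (nat \<Rightarrow> complex)" where
  "pmult f g = (\<lambda>j. f j * g j)"

definition is_inner_product :: "nat \<Rightarrow> ((nat \<Rightarrow> complex) \<Rightarrow> (nat \<Rightarrow> complex) \<Rightarrow> complex) \<Rightarrow> bool" where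
  "is_inner_product r ip \<longleftrightarrow>
     (\<forall>f\<in>Vsp r. \<forall>g\<in>Vsp r. \<forall>h\<in>Vsp r. ip (\<lambda>j. f j + g j) h = ip f h + ip g h) \<and>
     (\<forall>c. \<forall>f\<in>Vsp r. \<forall>g\<in>Vsp r. ip (\<lambda>j. c * f j) g = c * ip f g) \<and>
     (\<forall>f\<in>Vsp r. \<forall>g\<in>Vsp r. ip g f = cnj (ip f g)) \<and>
     (\<forall>f\<in>Vsp r. f \<noteq> (\<lambda>_. 0) \<longrightarrow> Im (ip f f) = 0 \<and> Re (ip f f) > 0)"

definition adjoint_mult :: "nat \<Rightarrow> ((nat \<Rightarrow> complex) \<Rightarrow> (nat \<Rightarrow> complex) \<Rightarrow> complex)
     \<Rightarrow> (nat \<Rightarrow> complex) \<Rightarrow> (nat \<Rightarrow> complex) \<Rightarrow> bool" where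
  "adjoint_mult r ip f h \<longleftrightarrow>
     (\<forall>g\<in>Vsp r. \<forall>k\<in>Vsp r. ip (pmult f g) k = ip g (pmult h k))"

definition eigen_conditions :: "nat \<Rightarrow> (nat \<Rightarrow> nat \<Rightarrow> complex)
     \<Rightarrow> ((nat \<Rightarrow> complex) \<Rightarrow> (nat \<Rightarrow> complex) \<Rightarrow> complex) \<Rightarrow> bool" where
  "eigen_conditions r lam ip \<longleftrightarrow>
     (\<forall>i\<in>{1..r}. \<forall>j\<in>{1..r}. ip (row_vec r lam i) (row_vec r lam j) = (if i = j then 1 else 0)) \<and>
     (\<forall>i\<in>{1..r}. \<exists>j\<in>{1..r}. adjoint_mult r ip (row_vec r lam i) (row_vec r lam j)) \<and>
     (\<forall>g\<in>Vsp r. pmult (row_vec r lam 1) g = g) \<and>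
     (\<forall>i\<in>{1..r}. \<forall>j\<in>{1..r}. \<forall>k\<in>{1..r}. \<exists>n::nat.
        ip (pmult (row_vec r lam i) (row_vec r lam j)) (row_vec r lam k) = of_nat n)"

text \<open>Fusion ring of rank r with basis b_1..b_r, structure constants N i j k = N_{i,j}^k,
  unit b_1 and duality d (i* = d i).\<close>
definition fusion_ring :: "nat \<Rightarrow> (nat \<Rightarrow> nat \<Rightarrow> nat \<Rightarrow> nat) \<Rightarrow> (nat \<Rightarrow> nat) \<Rightarrow> bool" where
  "fusion_ring r N d \<longleftrightarrow>
     r \<ge> 1 \<and>
     (\<forall>i\<in>{1..r}. \<forall>j\<in>{1..r}. \<forall>k\<in>{1..r}. \<forall>l\<in>{1..r}.
        (\<Sum>m\<in>{1..r}. N i j m * N m k l) = (\<Sum>m\<in>{1..r}. N j k m * N i m l)) \<and>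
     (\<forall>j\<in>{1..r}. \<forall>k\<in>{1..r}. N 1 j k = (if j = k then 1 else 0) \<and> N j 1 k = (if j = k then 1 else 0)) \<and>
     (\<forall>i\<in>{1..r}. d i \<in> {1..r} \<and>
        (\<forall>k\<in>{1..r}. N i k 1 = (if k = d i then 1 else 0) \<and> N k i 1 = (if k = d i then 1 else 0))) \<and>
     (\<forall>i\<in>{1..r}. \<forall>j\<in>{1..r}. \<forall>k\<in>{1..r}. N i j k = N (d i) k j \<and> N i j k = N k (d j) i)"

definition comm_fusion_ring :: "nat \<Rightarrow> (nat \<Rightarrow> nat \<Rightarrow> nat \<Rightarrow> nat) \<Rightarrow> (nat \<Rightarrow> nat) \<Rightarrow> bool" where
  "comm_fusion_ring r N d \<longleftrightarrow> fusion_ring r N d \<and>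
     (\<forall>i\<in>{1..r}. \<forall>j\<in>{1..r}. \<forall>k\<in>{1..r}. N i j k = N j i k)"

text \<open>lam is an eigentable: there is an invertible r x r matrix P (inverse Q) whose
  j-th column is a common eigenvector of all fusion matrices M_i = (N i j k)_{k,j}
  with eigenvalue lam i j.\<close>
definition eigentable :: "nat \<Rightarrow> (nat \<Rightarrow> nat \<Rightarrow> nat \<Rightarrow> nat) \<Rightarrow> (nat \<Rightarrow> nat \<Rightarrow> complex) \<Rightarrow> bool" where
  "eigentable r N lam \<longleftrightarrow>
     (\<exists>P Q :: nat \<Rightarrow> nat \<Rightarrow> complex.
        (\<forall>k\<in>{1..r}. \<forall>m\<in>{1..r}. (\<Sum>l\<in>{1..r}. P k l * Q l m) = (if k = m then 1 else 0)) \<and>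
        (\<forall>k\<in>{1..r}. \<forall>m\<in>{1..r}. (\<Sum>l\<in>{1..r}. Q k l * P l m) = (if k = m then 1 else 0)) \<and>
        (\<forall>i\<in>{1..r}. \<forall>j\<in>{1..r}. \<forall>k\<in>{1..r}.
           (\<Sum>l\<in>{1..r}. of_nat (N i l k) * P l j) = lam i j * P k j))"

end

theory Submission
  imports Defs "Jordan_Normal_Form.Determinant"
begin

text \<open>
  Orthonormality makes the rows \<open>\<lambda>\<^sub>i\<close> a basis of \<open>V\<close>, and \<open>N\<^sub>i\<^sub>j\<^sup>k\<close> are the coordinates of
  \<open>\<lambda>\<^sub>i \<lambda>\<^sub>j\<close> in it. Associativity and commutativity of the pointwise product give those of the
  structure constants, \<open>\<lambda>\<^sub>1 = 1\<close> gives the unit, and the adjunction \<open>M\<^sub>i\<^sup>* = M\<^sub>i\<^sub>*\<close> gives the duality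
  and, the \<open>N\<^sub>i\<^sub>j\<^sup>k\<close> being real, Frobenius reciprocity. Testing the adjunction on the standard
  basis shows \<open>\<lambda>\<^sub>i\<^sub>* = conj \<lambda>\<^sub>i\<close>, so the conjugated columns of the table are common eigenvectors
  of the fusion matrices.

  Conversely, the eigenvalue equation at the coordinate of \<open>b\<^sub>1\<close> shows that the \<open>j\<close>-th common
  eigenvector is a nonzero multiple of \<open>(\<lambda>\<^sub>i\<^sub>*\<^sub>,\<^sub>j)\<^sub>i\<close>. Hence the table is invertible and
  \<open>\<lambda>\<^sub>i \<lambda>\<^sub>m = \<Sum>\<^sub>l N\<^sub>i\<^sub>m\<^sup>l \<lambda>\<^sub>l\<close>; for the inner product making the rows orthonormal, Frobenius
  reciprocity becomes \<open>M\<^sub>i\<^sup>* = M\<^sub>i\<^sub>*\<close>.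
\<close>

lemma sum_atLeast1_atMost_eq_sum_lessThan:
  "(\<Sum>l\<in>{1..r}. f l) = (\<Sum>l<r. f (Suc l))"
proof -
  have "{1..r} = Suc ` {..<r}"
    by (simp add: image_Suc_lessThan)
  then show ?thesis
    by (simp add: sum.reindex)
qed

lemma right_inverse_imp_left_inverse_on_indices:
  fixes A B :: "nat \<Rightarrow> nat \<Rightarrow> 'a::field"
  assumes AB: "\<And>i j. i \<in> {1..r} \<Longrightarrow> j \<in> {1..r} \<Longrightarrow>
      (\<Sum>l\<in>{1..r}. A i l * B l j) = (if i = j then 1 else 0)"
    and i: "i \<in> {1..r}" and j: "j \<in> {1..r}"
  shows "(\<Sum>l\<in>{1..r}. B i l * A l j) = (if i = j then 1 else 0)"
proof -
  define mat_of where "mat_of C = mat r r (\<lambda>(i, j). C (Suc i) (Suc j))" for C :: "nat \<Rightarrow> nat \<Rightarrow> 'a"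
  have entry: "(mat_of C * mat_of D) $$ (a, b) = (\<Sum>l\<in>{1..r}. C (Suc a) l * D l (Suc b))"
    if "a < r" "b < r" for C D a b
    unfolding sum_atLeast1_atMost_eq_sum_lessThan
    using that by (simp add: mat_of_def scalar_prod_def atLeast0LessThan)
  have carrier: "mat_of C \<in> carrier_mat r r" for C
    by (simp add: mat_of_def)
  have "mat_of A * mat_of B = 1\<^sub>m r"
  proof (rule eq_matI)
    fix a b
    assume "a < dim_row (1\<^sub>m r)" "b < dim_col (1\<^sub>m r)"
    then show "(mat_of A * mat_of B) $$ (a, b) = 1\<^sub>m r $$ (a, b)"
      using entry[of a b A B] AB[of "Suc a" "Suc b"] by simp
  qed (simp_all add: mat_of_def)
  then have BA: "mat_of B * mat_of A = 1\<^sub>m r"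
    using mat_mult_left_right_inverse[OF carrier carrier] by blast
  obtain a b where ab: "i = Suc a" "j = Suc b" "a < r" "b < r"
    using i j by (cases i; cases j) auto
  have "(\<Sum>l\<in>{1..r}. B i l * A l j) = (mat_of B * mat_of A) $$ (a, b)"
    using entry[of a b B A] ab by simp
  also have "\<dots> = (if i = j then 1 else 0)"
    using BA ab by simp
  finally show ?thesis .
qed

definition std_basis :: "nat \<Rightarrow> nat \<Rightarrow> complex" where
  "std_basis a = (\<lambda>x. if x = a then 1 else 0)"

lemma std_basis_in_Vsp: "a \<in> {1..r} \<Longrightarrow> std_basis a \<in> Vsp r"
  by (auto simp: std_basis_def Vsp_def)

lemma row_vec_in_Vsp: "row_vec r lam i \<in> Vsp r"
  by (simp add: row_vec_def Vsp_def)

lemma pmult_in_Vsp: "f \<in> Vsp r \<Longrightarrow> pmult f g \<in> Vsp r"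
  by (simp add: pmult_def Vsp_def)

lemma pmult_commute: "pmult f g = pmult g f"
  by (simp add: pmult_def mult.commute)

lemma row_vec_apply: "a \<in> {1..r} \<Longrightarrow> row_vec r lam i a = lam i a"
  by (simp add: row_vec_def)

lemma Vsp_eq_sum_std_basis:
  assumes "f \<in> Vsp r"
  shows "f = (\<lambda>x. \<Sum>a\<in>{1..r}. f a * std_basis a x)"
  using assms by (auto simp: Vsp_def std_basis_def if_distrib cong: if_cong)

locale V_inner_product =
  fixes r :: nat and ip :: "(nat \<Rightarrow> complex) \<Rightarrow> (nat \<Rightarrow> complex) \<Rightarrow> complex"
  assumes is_ip: "is_inner_product r ip"
begin

lemma ip_add_left: "f \<in> Vsp r \<Longrightarrow> g \<in> Vsp r \<Longrightarrow> h \<in> Vsp r \<Longrightarrow>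
    ip (\<lambda>x. f x + g x) h = ip f h + ip g h"
  and ip_scale_left: "f \<in> Vsp r \<Longrightarrow> g \<in> Vsp r \<Longrightarrow> ip (\<lambda>x. c * f x) g = c * ip f g"
  and ip_commute: "f \<in> Vsp r \<Longrightarrow> g \<in> Vsp r \<Longrightarrow> ip g f = cnj (ip f g)"
  and ip_self_pos: "f \<in> Vsp r \<Longrightarrow> f \<noteq> (\<lambda>_. 0) \<Longrightarrow> Re (ip f f) > 0"
  using is_ip unfolding is_inner_product_def by blast+

lemma ip_scale_right: "f \<in> Vsp r \<Longrightarrow> g \<in> Vsp r \<Longrightarrow> ip g (\<lambda>x. c * f x) = cnj c * ip g f"
proof -
  assume f: "f \<in> Vsp r" and g: "g \<in> Vsp r"
  then have "(\<lambda>x. c * f x) \<in> Vsp r"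
    by (simp add: Vsp_def)
  then have "ip g (\<lambda>x. c * f x) = cnj (c * ip f g)"
    using ip_commute[of _ g] ip_scale_left[OF f g] g by simp
  also have "\<dots> = cnj c * ip g f"
    using ip_commute[OF f g] by simp
  finally show ?thesis .
qed

lemma ip_sum_left:
  assumes "finite S" and "\<And>s. s \<in> S \<Longrightarrow> f s \<in> Vsp r" and h: "h \<in> Vsp r"
  shows "ip (\<lambda>x. \<Sum>s\<in>S. c s * f s x) h = (\<Sum>s\<in>S. c s * ip (f s) h)"
  using assms(1,2)
proof (induction S rule: finite_induct)
  case empty
  show ?case
    using ip_scale_left[OF h h, of 0] by simp
next
  case (insert s S)
  have "(\<lambda>x. \<Sum>s\<in>S. c s * f s x) \<in> Vsp r" and "(\<lambda>x. c s * f s x) \<in> Vsp r"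
    using insert.prems by (auto simp: Vsp_def)
  then show ?case
    using insert h ip_add_left ip_scale_left by simp
qed

lemma ip_eq_sum_std_basis:
  assumes "f \<in> Vsp r" and "h \<in> Vsp r"
  shows "ip f h = (\<Sum>a\<in>{1..r}. f a * ip (std_basis a) h)"
proof -
  have "ip f h = ip (\<lambda>x. \<Sum>a\<in>{1..r}. f a * std_basis a x) h"
    using Vsp_eq_sum_std_basis[OF assms(1)] by (rule arg_cong[where f = "\<lambda>g. ip g h"])
  also have "\<dots> = (\<Sum>a\<in>{1..r}. f a * ip (std_basis a) h)"
    using assms(2) std_basis_in_Vsp by (intro ip_sum_left) auto
  finally show ?thesis .
qed

end

locale row_basis =
  fixes r :: nat and lam Y :: "nat \<Rightarrow> nat \<Rightarrow> complex"
  assumes rows_times_dual: "i \<in> {1..r} \<Longrightarrow> m \<in> {1..r} \<Longrightarrow>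
    (\<Sum>a\<in>{1..r}. lam i a * Y a m) = (if i = m then 1 else 0)"
begin

abbreviation row :: "nat \<Rightarrow> nat \<Rightarrow> complex" where
  "row i \<equiv> row_vec r lam i"

lemma dual_times_rows: "a \<in> {1..r} \<Longrightarrow> b \<in> {1..r} \<Longrightarrow>
    (\<Sum>m\<in>{1..r}. Y a m * lam m b) = (if a = b then 1 else 0)"
  by (rule right_inverse_imp_left_inverse_on_indices[OF rows_times_dual])

definition coord :: "(nat \<Rightarrow> complex) \<Rightarrow> nat \<Rightarrow> complex" where
  "coord f m = (\<Sum>a\<in>{1..r}. f a * Y a m)"

lemma coord_add: "coord (\<lambda>x. f x + g x) m = coord f m + coord g m"
  by (simp add: coord_def distrib_right sum.distrib)

lemma coord_scale: "coord (\<lambda>x. c * f x) m = c * coord f m"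
  by (simp add: coord_def sum_distrib_left mult.assoc)

lemma coord_row:
  assumes "k \<in> {1..r}" and "m \<in> {1..r}"
  shows "coord (row k) m = (if k = m then 1 else 0)"
proof -
  have "coord (row k) m = (\<Sum>a\<in>{1..r}. lam k a * Y a m)"
    unfolding coord_def by (intro sum.cong) (simp_all add: row_vec_apply)
  with rows_times_dual[OF assms] show ?thesis
    by simp
qed

lemma coord_row_combination:
  assumes "m \<in> {1..r}"
  shows "coord (\<lambda>x. \<Sum>l\<in>{1..r}. c l * row l x) m = c m"
proof -
  have "coord (\<lambda>x. \<Sum>l\<in>{1..r}. c l * row l x) m = (\<Sum>l\<in>{1..r}. c l * coord (row l) m)"
    unfolding coord_def sum_distrib_left sum_distrib_right by (subst sum.swap) (simp add: mult.assoc)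
  then show ?thesis
    using assms by (simp add: coord_row if_distrib cong: if_cong)
qed

lemma row_expansion:
  assumes f: "f \<in> Vsp r"
  shows "f = (\<lambda>x. \<Sum>m\<in>{1..r}. coord f m * row m x)"
proof
  fix x
  show "f x = (\<Sum>m\<in>{1..r}. coord f m * row m x)"
  proof (cases "x \<in> {1..r}")
    case True
    have "(\<Sum>m\<in>{1..r}. coord f m * row m x) = (\<Sum>a\<in>{1..r}. f a * (\<Sum>m\<in>{1..r}. Y a m * lam m x))"
      unfolding coord_def sum_distrib_left sum_distrib_right using True
      by (subst sum.swap) (simp add: row_vec_apply mult.assoc)
    also have "\<dots> = (\<Sum>a\<in>{1..r}. f a * (if a = x then 1 else 0))"
      using dual_times_rows[OF _ True] by (intro sum.cong) simp_all
    finally show ?thesis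
      using True by (simp add: if_distrib cong: if_cong)
  next
    case False
    then show ?thesis
      using f by (auto simp: Vsp_def row_vec_def)
  qed
qed

lemma ex_coord_nonzero:
  assumes f: "f \<in> Vsp r" and nz: "f \<noteq> (\<lambda>_. 0)"
  obtains m where "m \<in> {1..r}" and "coord f m \<noteq> 0"
proof -
  have "\<exists>m\<in>{1..r}. coord f m \<noteq> 0"
  proof (rule ccontr)
    assume "\<not> ?thesis"
    then have "f = (\<lambda>_. 0)"
      using row_expansion[OF f] by simp
    with nz show False ..
  qed
  then show ?thesis
    using that by blast
qed

end

locale eigen_conditions_setting = V_inner_product +
  fixes lam :: "nat \<Rightarrow> nat \<Rightarrow> complex"
  assumes conditions: "eigen_conditions r lam ip"
    and r_pos: "1 \<le> r"
begin

lemma rows_orthonormal: "i \<in> {1..r} \<Longrightarrow> j \<in> {1..r} \<Longrightarrow>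
    ip (row_vec r lam i) (row_vec r lam j) = (if i = j then 1 else 0)"
  and row_adjoint_exists: "i \<in> {1..r} \<Longrightarrow>
    \<exists>j\<in>{1..r}. adjoint_mult r ip (row_vec r lam i) (row_vec r lam j)"
  and row_one_mult: "g \<in> Vsp r \<Longrightarrow> pmult (row_vec r lam 1) g = g"
  and ip_row_mult_nat: "i \<in> {1..r} \<Longrightarrow> j \<in> {1..r} \<Longrightarrow> k \<in> {1..r} \<Longrightarrow>
    \<exists>n::nat. ip (pmult (row_vec r lam i) (row_vec r lam j)) (row_vec r lam k) = of_nat n"
  using conditions unfolding eigen_conditions_def by blast+

sublocale row_basis r lam "\<lambda>a m. ip (std_basis a) (row_vec r lam m)"
proof
  fix i m
  assume i: "i \<in> {1..r}" and m: "m \<in> {1..r}"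
  have "(\<Sum>a\<in>{1..r}. lam i a * ip (std_basis a) (row_vec r lam m))
      = ip (row_vec r lam i) (row_vec r lam m)"
    by (simp add: ip_eq_sum_std_basis row_vec_in_Vsp row_vec_apply)
  also have "\<dots> = (if i = m then 1 else 0)"
    using rows_orthonormal[OF i m] .
  finally show "(\<Sum>a\<in>{1..r}. lam i a * ip (std_basis a) (row_vec r lam m)) = (if i = m then 1 else 0)" .
qed

lemma one_mem: "1 \<in> {1..r}"
  using r_pos by simp

lemma coord_eq_ip: "f \<in> Vsp r \<Longrightarrow> coord f m = ip f (row m)"
  by (simp add: coord_def ip_eq_sum_std_basis row_vec_in_Vsp)

definition fusion_coeff :: "nat \<Rightarrow> nat \<Rightarrow> nat \<Rightarrow> complex" where
  "fusion_coeff i j k = ip (pmult (row i) (row j)) (row k)"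

lemma row_mult_expansion:
  "pmult (row i) (row j) = (\<lambda>x. \<Sum>m\<in>{1..r}. fusion_coeff i j m * row m x)"
  using row_expansion[OF pmult_in_Vsp[OF row_vec_in_Vsp]]
  by (simp add: coord_eq_ip pmult_in_Vsp row_vec_in_Vsp fusion_coeff_def)

lemma fusion_coeff_commute: "fusion_coeff i j k = fusion_coeff j i k"
  by (simp add: fusion_coeff_def pmult_commute)

lemma ip_row_mult_row_mult:
  "ip (pmult (pmult (row i) (row j)) (row k)) (row l)
     = (\<Sum>m\<in>{1..r}. fusion_coeff i j m * fusion_coeff m k l)"
proof -
  have "pmult (pmult (row i) (row j)) (row k) = (\<lambda>x. \<Sum>m\<in>{1..r}. fusion_coeff i j m * pmult (row m) (row k) x)"
    by (subst row_mult_expansion) (simp add: pmult_def sum_distrib_right mult.assoc)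
  then show ?thesis
    by (simp add: ip_sum_left pmult_in_Vsp row_vec_in_Vsp fusion_coeff_def)
qed

lemma fusion_coeff_assoc:
  "(\<Sum>m\<in>{1..r}. fusion_coeff i j m * fusion_coeff m k l)
     = (\<Sum>m\<in>{1..r}. fusion_coeff j k m * fusion_coeff i m l)"
proof -
  have "pmult (pmult (row i) (row j)) (row k) = pmult (pmult (row j) (row k)) (row i)"
    by (simp add: pmult_def mult_ac)
  then show ?thesis
    using ip_row_mult_row_mult[of i j k l] ip_row_mult_row_mult[of j k i l]
    by (simp add: fusion_coeff_commute[of _ i])
qed

definition dual :: "nat \<Rightarrow> nat" where
  "dual i = (SOME j. j \<in> {1..r} \<and> adjoint_mult r ip (row i) (row j))"

lemma dual_mem: "i \<in> {1..r} \<Longrightarrow> dual i \<in> {1..r}"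
  and adjoint_mult_dual: "i \<in> {1..r} \<Longrightarrow> adjoint_mult r ip (row i) (row (dual i))"
  unfolding dual_def using someI_ex[OF row_adjoint_exists[unfolded Bex_def]] by blast+

lemma ip_row_mult_adjoint: "i \<in> {1..r} \<Longrightarrow> g \<in> Vsp r \<Longrightarrow> h \<in> Vsp r \<Longrightarrow>
    ip (pmult (row i) g) h = ip g (pmult (row (dual i)) h)"
  using adjoint_mult_dual unfolding adjoint_mult_def by blast

lemma fusion_coeff_one_left:
  assumes j: "j \<in> {1..r}" and k: "k \<in> {1..r}"
  shows "fusion_coeff 1 j k = (if j = k then 1 else 0)"
proof -
  have "pmult (row 1) (row j) = row j"
    by (rule row_one_mult[OF row_vec_in_Vsp])
  with rows_orthonormal[OF j k] show ?thesis
    by (simp add: fusion_coeff_def)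
qed

lemma fusion_coeff_one_target:
  assumes i: "i \<in> {1..r}" and k: "k \<in> {1..r}"
  shows "fusion_coeff i k 1 = (if k = dual i then 1 else 0)"
proof -
  have "fusion_coeff i k 1 = ip (row k) (pmult (row (dual i)) (row 1))"
    unfolding fusion_coeff_def by (rule ip_row_mult_adjoint[OF i row_vec_in_Vsp row_vec_in_Vsp])
  also have "pmult (row (dual i)) (row 1) = row (dual i)"
    using row_one_mult[OF row_vec_in_Vsp] pmult_commute by metis
  finally show ?thesis
    using rows_orthonormal[OF k dual_mem[OF i]] by simp
qed

lemma fusion_coeff_real: "i \<in> {1..r} \<Longrightarrow> j \<in> {1..r} \<Longrightarrow> k \<in> {1..r} \<Longrightarrow>
    cnj (fusion_coeff i j k) = fusion_coeff i j k"
  using ip_row_mult_nat unfolding fusion_coeff_def by fastforce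

lemma fusion_coeff_frobenius:
  assumes i: "i \<in> {1..r}" and j: "j \<in> {1..r}" and k: "k \<in> {1..r}"
  shows "fusion_coeff i j k = fusion_coeff (dual i) k j"
proof -
  have "fusion_coeff i j k = ip (row j) (pmult (row (dual i)) (row k))"
    unfolding fusion_coeff_def by (rule ip_row_mult_adjoint[OF i row_vec_in_Vsp row_vec_in_Vsp])
  also have "\<dots> = cnj (fusion_coeff (dual i) k j)"
    unfolding fusion_coeff_def by (rule ip_commute[OF pmult_in_Vsp[OF row_vec_in_Vsp] row_vec_in_Vsp])
  also have "\<dots> = fusion_coeff (dual i) k j"
    using fusion_coeff_real dual_mem[OF i] j k by blast
  finally show ?thesis .
qed

text \<open>Test the adjunction on the standard basis vector at \<open>a\<close>, on which \<open>M\<^sub>i\<close> acts as the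
  scalar \<open>\<lambda>\<^sub>i\<^sub>,\<^sub>a\<close>.\<close>
lemma row_dual_eq_cnj: "i \<in> {1..r} \<Longrightarrow> a \<in> {1..r} \<Longrightarrow> lam (dual i) a = cnj (lam i a)"
proof -
  assume i: "i \<in> {1..r}" and a: "a \<in> {1..r}"
  let ?e = "std_basis a"
  have e: "?e \<in> Vsp r"
    using std_basis_in_Vsp[OF a] .
  have scale: "pmult (row t) ?e = (\<lambda>x. lam t a * ?e x)" for t
    using a by (auto simp: pmult_def row_vec_def std_basis_def)
  have "lam i a * ip ?e ?e = cnj (lam (dual i) a) * ip ?e ?e"
    using ip_row_mult_adjoint[OF i e e] by (simp add: scale ip_scale_left[OF e e] ip_scale_right[OF e e])
  moreover have "?e \<noteq> (\<lambda>_. 0)"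
    by (metis std_basis_def zero_neq_one)
  then have "ip ?e ?e \<noteq> 0"
    using ip_self_pos[OF e] by force
  ultimately show ?thesis
    by simp
qed

definition fusion_nat :: "nat \<Rightarrow> nat \<Rightarrow> nat \<Rightarrow> nat" where
  "fusion_nat i j k = nat \<lfloor>Re (fusion_coeff i j k)\<rfloor>"

lemma of_nat_fusion_nat: "i \<in> {1..r} \<Longrightarrow> j \<in> {1..r} \<Longrightarrow> k \<in> {1..r} \<Longrightarrow>
    of_nat (fusion_nat i j k) = fusion_coeff i j k"
  using ip_row_mult_nat unfolding fusion_nat_def fusion_coeff_def by fastforce

lemma fusion_nat_eq_iff:
  assumes "i \<in> {1..r}" "j \<in> {1..r}" "k \<in> {1..r}" "i' \<in> {1..r}" "j' \<in> {1..r}" "k' \<in> {1..r}"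
  shows "fusion_nat i j k = fusion_nat i' j' k' \<longleftrightarrow> fusion_coeff i j k = fusion_coeff i' j' k'"
  using of_nat_fusion_nat[of i j k] of_nat_fusion_nat[of i' j' k'] assms
  by (metis of_nat_eq_iff)

lemma fusion_nat_eq_delta:
  assumes "i \<in> {1..r}" "j \<in> {1..r}" "k \<in> {1..r}"
  shows "fusion_nat i j k = (if P then 1 else 0) \<longleftrightarrow> fusion_coeff i j k = (if P then 1 else 0)"
  using of_nat_fusion_nat[OF assms] by (metis of_nat_0 of_nat_1 of_nat_eq_iff)

lemma comm_fusion_ring_fusion_nat: "comm_fusion_ring r fusion_nat dual"
  unfolding comm_fusion_ring_def fusion_ring_def
proof (intro conjI ballI)
  fix i j k l
  assume "i \<in> {1..r}" "j \<in> {1..r}" "k \<in> {1..r}" "l \<in> {1..r}"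
  then have "(of_nat (\<Sum>m\<in>{1..r}. fusion_nat i j m * fusion_nat m k l) :: complex)
      = of_nat (\<Sum>m\<in>{1..r}. fusion_nat j k m * fusion_nat i m l)"
    using fusion_coeff_assoc[of i j k l] by (simp add: of_nat_fusion_nat)
  then show "(\<Sum>m\<in>{1..r}. fusion_nat i j m * fusion_nat m k l)
      = (\<Sum>m\<in>{1..r}. fusion_nat j k m * fusion_nat i m l)"
    by (rule of_nat_eq_iff[THEN iffD1])
next
  fix j k
  assume j: "j \<in> {1..r}" and k: "k \<in> {1..r}"
  show "fusion_nat 1 j k = (if j = k then 1 else 0)" "fusion_nat j 1 k = (if j = k then 1 else 0)"
    using fusion_coeff_one_left[OF j k] fusion_coeff_commute[of j 1 k]
    by (simp_all only: fusion_nat_eq_delta one_mem j k)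
next
  fix i k
  assume i: "i \<in> {1..r}" and k: "k \<in> {1..r}"
  show "fusion_nat i k 1 = (if k = dual i then 1 else 0)" "fusion_nat k i 1 = (if k = dual i then 1 else 0)"
    using fusion_coeff_one_target[OF i k] fusion_coeff_commute[of k i 1]
    by (simp_all only: fusion_nat_eq_delta one_mem i k)
next
  fix i j k
  assume i: "i \<in> {1..r}" and j: "j \<in> {1..r}" and k: "k \<in> {1..r}"
  show "fusion_nat i j k = fusion_nat (dual i) k j"
    using fusion_coeff_frobenius[OF i j k] fusion_nat_eq_iff[OF i j k dual_mem[OF i] k j] by simp
  show "fusion_nat i j k = fusion_nat k (dual j) i"
    using fusion_coeff_frobenius[OF j i k] fusion_coeff_commute[of i j] fusion_coeff_commute[of "dual j" k]
      fusion_nat_eq_iff[OF i j k k dual_mem[OF j] i] by simp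
  show "fusion_nat i j k = fusion_nat j i k"
    using fusion_coeff_commute[of i j k] fusion_nat_eq_iff[OF i j k j i k] by simp
qed (use r_pos dual_mem in auto)

text \<open>Since \<open>\<lambda>\<^sub>i\<^sub>* = conj \<lambda>\<^sub>i\<close> and the structure constants are real, conjugating the
  expansion of \<open>\<lambda>\<^sub>i\<^sub>* \<lambda>\<^sub>k\<close> yields the eigenvalue equation.\<close>
lemma eigentable_fusion_nat: "eigentable r fusion_nat lam"
  unfolding eigentable_def
proof (rule exI[of _ "\<lambda>l j. cnj (lam l j)"], rule exI[of _ "\<lambda>l m. cnj (ip (std_basis l) (row m))"],
    intro conjI ballI)
  fix k m
  assume "k \<in> {1..r}" "m \<in> {1..r}"
  then show "(\<Sum>l\<in>{1..r}. cnj (lam k l) * cnj (ip (std_basis l) (row m))) = (if k = m then 1 else 0)"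
    using rows_times_dual[of k m] by (simp flip: complex_cnj_mult cnj_sum)
next
  fix k m
  assume "k \<in> {1..r}" "m \<in> {1..r}"
  then show "(\<Sum>l\<in>{1..r}. cnj (ip (std_basis k) (row l)) * cnj (lam l m)) = (if k = m then 1 else 0)"
    using dual_times_rows[of k m] by (simp flip: complex_cnj_mult cnj_sum)
next
  fix i j k
  assume i: "i \<in> {1..r}" and j: "j \<in> {1..r}" and k: "k \<in> {1..r}"
  have "of_nat (fusion_nat i l k) * cnj (lam l j) = cnj (fusion_coeff (dual i) k l * row l j)"
    if l: "l \<in> {1..r}" for l
    using of_nat_fusion_nat[OF i l k] fusion_coeff_frobenius[OF i l k]
      fusion_coeff_real[OF dual_mem[OF i] k l] row_vec_apply[OF j]
    by simp
  then have "(\<Sum>l\<in>{1..r}. of_nat (fusion_nat i l k) * cnj (lam l j))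
      = cnj (\<Sum>l\<in>{1..r}. fusion_coeff (dual i) k l * row l j)"
    by (simp add: cnj_sum)
  also have "\<dots> = cnj (lam (dual i) j * lam k j)"
    using fun_cong[OF row_mult_expansion[of "dual i" k], of j] j by (simp add: pmult_def row_vec_apply)
  finally show "(\<Sum>l\<in>{1..r}. of_nat (fusion_nat i l k) * cnj (lam l j)) = lam i j * cnj (lam k j)"
    using row_dual_eq_cnj[OF i j] by simp
qed

end

locale fusion_eigentable =
  fixes r :: nat and N :: "nat \<Rightarrow> nat \<Rightarrow> nat \<Rightarrow> nat" and d :: "nat \<Rightarrow> nat"
    and lam P Q :: "nat \<Rightarrow> nat \<Rightarrow> complex"
  assumes fusion: "comm_fusion_ring r N d"
    and PQ: "\<forall>k\<in>{1..r}. \<forall>m\<in>{1..r}. (\<Sum>l\<in>{1..r}. P k l * Q l m) = (if k = m then 1 else 0)"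
    and QP: "\<forall>k\<in>{1..r}. \<forall>m\<in>{1..r}. (\<Sum>l\<in>{1..r}. Q k l * P l m) = (if k = m then 1 else 0)"
    and eigen: "\<forall>i\<in>{1..r}. \<forall>j\<in>{1..r}. \<forall>k\<in>{1..r}.
      (\<Sum>l\<in>{1..r}. of_nat (N i l k) * P l j) = lam i j * P k j"
begin

lemma one_mem: "1 \<in> {1..r}"
  using fusion unfolding comm_fusion_ring_def fusion_ring_def by simp

lemma N_one_left: "j \<in> {1..r} \<Longrightarrow> k \<in> {1..r} \<Longrightarrow> N 1 j k = (if j = k then 1 else 0)"
  and dual_mem: "i \<in> {1..r} \<Longrightarrow> d i \<in> {1..r}"
  and N_one_target: "i \<in> {1..r} \<Longrightarrow> k \<in> {1..r} \<Longrightarrow> N i k 1 = (if k = d i then 1 else 0)"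
  and N_frobenius_left: "i \<in> {1..r} \<Longrightarrow> j \<in> {1..r} \<Longrightarrow> k \<in> {1..r} \<Longrightarrow> N i j k = N (d i) k j"
  and N_frobenius_right: "i \<in> {1..r} \<Longrightarrow> j \<in> {1..r} \<Longrightarrow> k \<in> {1..r} \<Longrightarrow> N i j k = N k (d j) i"
  and N_commute: "i \<in> {1..r} \<Longrightarrow> j \<in> {1..r} \<Longrightarrow> k \<in> {1..r} \<Longrightarrow> N i j k = N j i k"
  using fusion unfolding comm_fusion_ring_def fusion_ring_def by blast+

lemma dual_one: "d 1 = 1"
  using N_one_left[OF one_mem one_mem] N_one_target[OF one_mem one_mem] by (metis zero_neq_one)

lemma dual_dual:
  assumes i: "i \<in> {1..r}"
  shows "d (d i) = i"
proof -
  have "N (d i) i 1 = N i (d i) 1"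
    using N_commute[OF dual_mem[OF i] i one_mem] .
  also have "\<dots> = 1"
    using N_one_target[OF i dual_mem[OF i]] by simp
  finally show ?thesis
    using N_one_target[OF dual_mem[OF i] i] by (metis zero_neq_one)
qed

lemma sum_reindex_dual: "(\<Sum>i\<in>{1..r}. g (d i)) = (\<Sum>i\<in>{1..r}. g i)"
  by (rule sum.reindex_bij_witness[where i = d and j = d]) (use dual_dual dual_mem in blast)+

text \<open>The eigenvalue equation at the coordinate of the unit, where \<open>N\<^sub>i\<^sub>l\<^sup>1 = \<delta>\<^sub>l\<^sub>,\<^sub>i\<^sub>*\<close>.\<close>
lemma eigenvector_dual_entry: "i \<in> {1..r} \<Longrightarrow> j \<in> {1..r} \<Longrightarrow> P (d i) j = lam i j * P 1 j"
proof -
  assume i: "i \<in> {1..r}" and j: "j \<in> {1..r}"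
  have "(\<Sum>l\<in>{1..r}. of_nat (N i l 1) * P l j) = (\<Sum>l\<in>{1..r}. if l = d i then P l j else 0)"
  proof (intro sum.cong refl)
    fix l
    assume "l \<in> {1..r}"
    then show "of_nat (N i l 1) * P l j = (if l = d i then P l j else 0)"
      using N_one_target[OF i] by (cases "l = d i") simp_all
  qed
  also have "\<dots> = P (d i) j"
    using dual_mem[OF i] by simp
  finally have "(\<Sum>l\<in>{1..r}. of_nat (N i l 1) * P l j) = P (d i) j" .
  with eigen i j one_mem show ?thesis
    by auto
qed

lemma eigenvector_entry: "l \<in> {1..r} \<Longrightarrow> j \<in> {1..r} \<Longrightarrow> P l j = lam (d l) j * P 1 j"
  using eigenvector_dual_entry[OF dual_mem] dual_dual by metis

lemma eigenvector_first_entry_nonzero: "j \<in> {1..r} \<Longrightarrow> P 1 j \<noteq> 0"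
proof
  assume j: "j \<in> {1..r}" and "P 1 j = 0"
  then have "P l j = 0" if "l \<in> {1..r}" for l
    using eigenvector_entry[OF that j] by simp
  then have "(\<Sum>l\<in>{1..r}. Q j l * P l j) = 0"
    by simp
  with QP j show False
    by simp
qed

lemma lam_one: "j \<in> {1..r} \<Longrightarrow> lam 1 j = 1"
  using eigenvector_dual_entry[OF one_mem, of j] eigenvector_first_entry_nonzero[of j] dual_one by simp

definition dual_basis :: "nat \<Rightarrow> nat \<Rightarrow> complex" where
  "dual_basis a m = P 1 a * Q a (d m)"

sublocale row_basis r lam dual_basis
proof
  fix i m
  assume i: "i \<in> {1..r}" and m: "m \<in> {1..r}"
  have "(\<Sum>a\<in>{1..r}. lam i a * dual_basis a m) = (\<Sum>a\<in>{1..r}. P (d i) a * Q a (d m))"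
    using eigenvector_dual_entry[OF i] by (intro sum.cong) (simp_all add: dual_basis_def mult.assoc)
  also have "\<dots> = (if d i = d m then 1 else 0)"
    using PQ dual_mem[OF i] dual_mem[OF m] by blast
  also have "\<dots> = (if i = m then 1 else 0)"
    using dual_dual[OF i] dual_dual[OF m] by metis
  finally show "(\<Sum>a\<in>{1..r}. lam i a * dual_basis a m) = (if i = m then 1 else 0)" .
qed

lemma lam_mult_expansion:
  assumes i: "i \<in> {1..r}" and m: "m \<in> {1..r}" and j: "j \<in> {1..r}"
  shows "lam i j * lam m j = (\<Sum>l\<in>{1..r}. of_nat (N i m l) * lam l j)"
proof -
  have "lam i j * lam m j * P 1 j = lam i j * P (d m) j"
    using eigenvector_dual_entry[OF m j] by simp
  also have "\<dots> = (\<Sum>l\<in>{1..r}. of_nat (N i l (d m)) * P l j)"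
    using eigen i j dual_mem[OF m] by simp
  also have "\<dots> = (\<Sum>l\<in>{1..r}. of_nat (N i l (d m)) * lam (d l) j * P 1 j)"
  proof (intro sum.cong refl)
    fix l
    assume "l \<in> {1..r}"
    then show "of_nat (N i l (d m)) * P l j = of_nat (N i l (d m)) * lam (d l) j * P 1 j"
      using eigenvector_entry[of l j] j by simp
  qed
  also have "\<dots> = (\<Sum>l\<in>{1..r}. of_nat (N i l (d m)) * lam (d l) j) * P 1 j"
    by (simp add: sum_distrib_right)
  also have "(\<Sum>l\<in>{1..r}. of_nat (N i l (d m)) * lam (d l) j)
      = (\<Sum>l\<in>{1..r}. of_nat (N i (d l) (d m)) * lam (d (d l)) j)"
    by (rule sum_reindex_dual[symmetric])
  also have "\<dots> = (\<Sum>l\<in>{1..r}. of_nat (N i m l) * lam l j)"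
  proof (intro sum.cong refl)
    fix l
    assume l: "l \<in> {1..r}"
    have "N i m l = N (d l) i (d m)"
      using N_frobenius_right[OF i m l] N_frobenius_left[OF l dual_mem[OF m] i] by simp
    then show "of_nat (N i (d l) (d m)) * lam (d (d l)) j = of_nat (N i m l) * lam l j"
      using N_commute[OF dual_mem[OF l] i dual_mem[OF m]] dual_dual[OF l] by simp
  qed
  finally show ?thesis
    using eigenvector_first_entry_nonzero[OF j] by simp
qed

lemma row_mult_expansion:
  assumes i: "i \<in> {1..r}" and g: "g \<in> Vsp r"
  shows "pmult (row i) g = (\<lambda>x. \<Sum>l\<in>{1..r}. (\<Sum>a\<in>{1..r}. coord g a * of_nat (N i a l)) * row l x)"
proof
  fix x
  show "pmult (row i) g x = (\<Sum>l\<in>{1..r}. (\<Sum>a\<in>{1..r}. coord g a * of_nat (N i a l)) * row l x)"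
  proof (cases "x \<in> {1..r}")
    case x: True
    have "pmult (row i) g x = (\<Sum>a\<in>{1..r}. coord g a * (lam i x * lam a x))"
      using fun_cong[OF row_expansion[OF g], of x] x
      by (simp add: pmult_def row_vec_apply sum_distrib_left mult_ac)
    also have "\<dots> = (\<Sum>a\<in>{1..r}. \<Sum>l\<in>{1..r}. coord g a * of_nat (N i a l) * lam l x)"
      using lam_mult_expansion[OF i _ x] by (simp add: sum_distrib_left mult.assoc)
    also have "\<dots> = (\<Sum>l\<in>{1..r}. (\<Sum>a\<in>{1..r}. coord g a * of_nat (N i a l)) * row l x)"
      using x by (subst sum.swap) (simp add: sum_distrib_right row_vec_apply)
    finally show ?thesis .
  next
    case False
    then show ?thesis
      by (auto simp: pmult_def row_vec_def)
  qed
qed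

lemma coord_row_mult: "i \<in> {1..r} \<Longrightarrow> g \<in> Vsp r \<Longrightarrow> m \<in> {1..r} \<Longrightarrow>
    coord (pmult (row i) g) m = (\<Sum>a\<in>{1..r}. coord g a * of_nat (N i a m))"
  using row_mult_expansion coord_row_combination by presburger

lemma coord_row_mult_row:
  assumes i: "i \<in> {1..r}" and j: "j \<in> {1..r}" and m: "m \<in> {1..r}"
  shows "coord (pmult (row i) (row j)) m = of_nat (N i j m)"
proof -
  have "coord (pmult (row i) (row j)) m = (\<Sum>a\<in>{1..r}. coord (row j) a * of_nat (N i a m))"
    by (rule coord_row_mult[OF i row_vec_in_Vsp m])
  also have "\<dots> = (\<Sum>a\<in>{1..r}. if a = j then of_nat (N i a m) else 0)"
    using coord_row[OF j] by (intro sum.cong refl) simp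
  also have "\<dots> = of_nat (N i j m)"
    using j by simp
  finally show ?thesis .
qed

definition ip_rows :: "(nat \<Rightarrow> complex) \<Rightarrow> (nat \<Rightarrow> complex) \<Rightarrow> complex" where
  "ip_rows f g = (\<Sum>m\<in>{1..r}. coord f m * cnj (coord g m))"

lemma is_inner_product_ip_rows: "is_inner_product r ip_rows"
  unfolding is_inner_product_def
proof (intro conjI ballI allI impI)
  fix f g h :: "nat \<Rightarrow> complex"
  show "ip_rows (\<lambda>x. f x + g x) h = ip_rows f h + ip_rows g h"
    by (simp add: ip_rows_def coord_add distrib_right sum.distrib)
next
  fix c and f g :: "nat \<Rightarrow> complex"
  show "ip_rows (\<lambda>x. c * f x) g = c * ip_rows f g"
    by (simp add: ip_rows_def coord_scale sum_distrib_left mult.assoc)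
next
  fix f g :: "nat \<Rightarrow> complex"
  show "ip_rows g f = cnj (ip_rows f g)"
    by (simp add: ip_rows_def mult.commute)
next
  fix f :: "nat \<Rightarrow> complex"
  assume f: "f \<in> Vsp r" and nz: "f \<noteq> (\<lambda>_. 0)"
  have norm_sq: "ip_rows f f = of_real (\<Sum>m\<in>{1..r}. (cmod (coord f m))\<^sup>2)"
    by (simp only: ip_rows_def of_real_sum complex_norm_square)
  obtain m where m: "m \<in> {1..r}" "coord f m \<noteq> 0"
    using ex_coord_nonzero[OF f nz] .
  have "(\<Sum>m\<in>{1..r}. (cmod (coord f m))\<^sup>2) > 0"
    by (rule sum_pos2[OF _ m(1)]) (use m(2) in auto)
  then show "Im (ip_rows f f) = 0" "Re (ip_rows f f) > 0"
    unfolding norm_sq by simp_all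
qed

lemma ip_rows_row_mult_adjoint:
  assumes i: "i \<in> {1..r}" and g: "g \<in> Vsp r" and h: "h \<in> Vsp r"
  shows "ip_rows (pmult (row i) g) h = ip_rows g (pmult (row (d i)) h)"
proof -
  have "ip_rows (pmult (row i) g) h
      = (\<Sum>m\<in>{1..r}. \<Sum>a\<in>{1..r}. coord g a * of_nat (N i a m) * cnj (coord h m))"
    using coord_row_mult[OF i g] by (simp add: ip_rows_def sum_distrib_right)
  also have "\<dots> = (\<Sum>a\<in>{1..r}. \<Sum>m\<in>{1..r}. coord g a * (cnj (coord h m) * of_nat (N (d i) m a)))"
    using N_frobenius_left[OF i] by (subst sum.swap) (simp add: mult_ac)
  also have "\<dots> = ip_rows g (pmult (row (d i)) h)"
    using coord_row_mult[OF dual_mem[OF i] h] by (simp add: ip_rows_def sum_distrib_left)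
  finally show ?thesis .
qed

lemma eigen_conditions_ip_rows: "eigen_conditions r lam ip_rows"
  unfolding eigen_conditions_def
proof (intro conjI ballI)
  fix i j
  assume i: "i \<in> {1..r}" and j: "j \<in> {1..r}"
  have "ip_rows (row i) (row j) = (\<Sum>m\<in>{1..r}. if m = i then (if j = m then 1 else 0) else 0)"
    unfolding ip_rows_def using coord_row[OF i] coord_row[OF j] by (intro sum.cong refl) auto
  then show "ip_rows (row i) (row j) = (if i = j then 1 else 0)"
    using i by simp
next
  fix i
  assume "i \<in> {1..r}"
  then show "\<exists>j\<in>{1..r}. adjoint_mult r ip_rows (row i) (row j)"
    using ip_rows_row_mult_adjoint dual_mem unfolding adjoint_mult_def by blast
next
  fix g
  assume g: "g \<in> Vsp r"
  show "pmult (row 1) g = g"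
  proof
    fix x
    show "pmult (row 1) g x = g x"
      using g lam_one[of x] by (cases "x \<in> {1..r}") (auto simp: pmult_def row_vec_def Vsp_def)
  qed
next
  fix i j k
  assume i: "i \<in> {1..r}" and j: "j \<in> {1..r}" and k: "k \<in> {1..r}"
  have "ip_rows (pmult (row i) (row j)) (row k) = (\<Sum>m\<in>{1..r}. if m = k then of_nat (N i j m) else 0)"
    unfolding ip_rows_def using coord_row_mult_row[OF i j] coord_row[OF k] by (intro sum.cong refl) simp
  also have "\<dots> = of_nat (N i j k)"
    using k by simp
  finally have "ip_rows (pmult (row i) (row j)) (row k) = of_nat (N i j k)" .
  then show "\<exists>n::nat. ip_rows (pmult (row i) (row j)) (row k) = of_nat n"
    by blast
qed

end

theorem theorem2p2:
  fixes r :: nat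
  assumes "r \<ge> 1"
  shows
   "(\<forall>(lam :: nat \<Rightarrow> nat \<Rightarrow> complex) ip.
       is_inner_product r ip \<and> eigen_conditions r lam ip \<longrightarrow>
       (\<exists>(N :: nat \<Rightarrow> nat \<Rightarrow> nat \<Rightarrow> nat) d.
          (\<forall>i\<in>{1..r}. \<forall>j\<in>{1..r}. \<forall>k\<in>{1..r}.
             of_nat (N i j k) = ip (pmult (row_vec r lam i) (row_vec r lam j)) (row_vec r lam k)) \<and>
          comm_fusion_ring r N d \<and>
          (\<forall>i\<in>{1..r}. adjoint_mult r ip (row_vec r lam i) (row_vec r lam (d i))) \<and>
          eigentable r N lam))
    \<and>
    (\<forall>(N :: nat \<Rightarrow> nat \<Rightarrow> nat \<Rightarrow> nat) d (lam :: nat \<Rightarrow> nat \<Rightarrow> complex).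
       comm_fusion_ring r N d \<and> eigentable r N lam \<longrightarrow>
       (\<exists>ip. is_inner_product r ip \<and> eigen_conditions r lam ip))"
proof (intro conjI allI impI)
  fix lam :: "nat \<Rightarrow> nat \<Rightarrow> complex" and ip
  assume "is_inner_product r ip \<and> eigen_conditions r lam ip"
  then interpret eigen_conditions_setting r ip lam
    using assms by unfold_locales auto
  show "\<exists>(N :: nat \<Rightarrow> nat \<Rightarrow> nat \<Rightarrow> nat) d.
          (\<forall>i\<in>{1..r}. \<forall>j\<in>{1..r}. \<forall>k\<in>{1..r}.
             of_nat (N i j k) = ip (pmult (row_vec r lam i) (row_vec r lam j)) (row_vec r lam k)) \<and>
          comm_fusion_ring r N d \<and>
          (\<forall>i\<in>{1..r}. adjoint_mult r ip (row_vec r lam i) (row_vec r lam (d i))) \<and>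
          eigentable r N lam"
    using of_nat_fusion_nat comm_fusion_ring_fusion_nat adjoint_mult_dual eigentable_fusion_nat
    unfolding fusion_coeff_def by blast
next
  fix N :: "nat \<Rightarrow> nat \<Rightarrow> nat \<Rightarrow> nat" and d and lam :: "nat \<Rightarrow> nat \<Rightarrow> complex"
  assume "comm_fusion_ring r N d \<and> eigentable r N lam"
  then obtain P Q where "fusion_eigentable r N d lam P Q"
    unfolding eigentable_def fusion_eigentable_def by blast
  then interpret fusion_eigentable r N d lam P Q .
  show "\<exists>ip. is_inner_product r ip \<and> eigen_conditions r lam ip"
    using is_inner_product_ip_rows eigen_conditions_ip_rows by blast
qed

end
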